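(* Let $X$ be an Alexandroff space and define an equivalence relation $\sim$ on $X$ by $x\sim y$ if and only if $S(x)=S(y)$. Then the quotient space $X/\sim$ (with the quotient topology) is discrete if and only if $S(x)$ is irreducible for every $x\in X$.
   Context: A topological space $X$ is an Alexandroff space if arbitrary intersections of open sets are open. In an Alexandroff space, $S(x)$ denotes the minimal open neighborhood of $x$, i.e. the intersection of all open sets containing $x$, which is open. $S(x)$ is called irreducible if for every $y\in X$, $S(y)\subseteq S(x)$ implies $S(y)=S(x)$. *)

theory Defs
  imports "HOL-Analysis.Analysis"
begin

text \<open>Alexandroff space: arbitrary (nonempty) intersections of open sets are open.
  The empty intersection is the whole space, which is always open.\<close>
definition alexandroff_space :: "'a topology \<Rightarrow> bool" where
  "alexandroff_space X \<longleftrightarrow>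
     (\<forall>\<F>. \<F> \<noteq> {} \<and> (\<forall>U\<in>\<F>. openin X U) \<longrightarrow> openin X (\<Inter>\<F>))"

definition min_nbhd :: "'a topology \<Rightarrow> 'a \<Rightarrow> 'a set" where
  "min_nbhd X x = \<Inter>{U. openin X U \<and> x \<in> U}"

definition irreducible_nbhd :: "'a topology \<Rightarrow> 'a \<Rightarrow> bool" where
  "irreducible_nbhd X x \<longleftrightarrow>
     (\<forall>y\<in>topspace X. min_nbhd X y \<subseteq> min_nbhd X x \<longrightarrow> min_nbhd X y = min_nbhd X x)"

definition same_nbhd_rel :: "'a topology \<Rightarrow> ('a \<times> 'a) set" where
  "same_nbhd_rel X = {(x, y). x \<in> topspace X \<and> y \<in> topspace X \<and> min_nbhd X x = min_nbhd X y}"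

text \<open>Quotient topology on the set of equivalence classes: a set of classes is open
  iff its union (the preimage under the quotient map) is open in X.\<close>
definition quotient_topology :: "'a topology \<Rightarrow> ('a \<times> 'a) set \<Rightarrow> 'a set topology" where
  "quotient_topology X R =
     topology (\<lambda>\<U>. \<U> \<subseteq> topspace X // R \<and> openin X (\<Union>\<U>))"

end

theory Submission
  imports Defs
begin

text \<open>A set of classes is open in the quotient iff its union is open in X, so the quotient
  is discrete iff every class is open in X. The class of x lies inside S(x) and, since
  y \<in> S(x) forces S(y) \<subseteq> S(x), it equals S(x) when S(x) is irreducible; S(x) being open,
  the class is then open. Conversely, an open class containing x contains S(x), so every y
  with S(y) \<subseteq> S(x) lies in the class of x.\<close>

lemma Union_Int_quotient:
  assumes "equiv A r" "S \<subseteq> A // r" "T \<subseteq> A // r"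
  shows "\<Union>(S \<inter> T) = \<Union>S \<inter> \<Union>T"
proof
  show "\<Union>S \<inter> \<Union>T \<subseteq> \<Union>(S \<inter> T)"
  proof
    fix z assume "z \<in> \<Union>S \<inter> \<Union>T"
    then obtain a b where "a \<in> S" "b \<in> T" "z \<in> a" "z \<in> b" by auto
    moreover have "a = b \<or> a \<inter> b = {}"
      using quotient_disj[OF assms(1)] assms(2,3) \<open>a \<in> S\<close> \<open>b \<in> T\<close> by blast
    ultimately show "z \<in> \<Union>(S \<inter> T)" by auto
  qed
qed blast

lemma openin_quotient_topology:
  assumes "equiv (topspace X) r"
  shows "openin (quotient_topology X r) \<U> \<longleftrightarrow> \<U> \<subseteq> topspace X // r \<and> openin X (\<Union>\<U>)"
proof -
  have "istopology (\<lambda>\<U>. \<U> \<subseteq> topspace X // r \<and> openin X (\<Union>\<U>))"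
    unfolding istopology_def
  proof (rule conjI; intro allI impI)
    fix S T
    assume "S \<subseteq> topspace X // r \<and> openin X (\<Union>S)" "T \<subseteq> topspace X // r \<and> openin X (\<Union>T)"
    then show "S \<inter> T \<subseteq> topspace X // r \<and> openin X (\<Union>(S \<inter> T))"
      by (auto simp: Union_Int_quotient[OF assms])
  next
    fix K assume K: "\<forall>S\<in>K. S \<subseteq> topspace X // r \<and> openin X (\<Union>S)"
    have "\<Union>(\<Union>K) = (\<Union>S\<in>K. \<Union>S)" by blast
    moreover have "openin X (\<Union>S\<in>K. \<Union>S)"
      using K by (intro openin_Union) auto
    ultimately show "\<Union>K \<subseteq> topspace X // r \<and> openin X (\<Union>(\<Union>K))"
      using K by auto
  qed
  then show ?thesis
    unfolding quotient_topology_def by simp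
qed

lemma quotient_topology_eq_discrete_iff:
  assumes "equiv (topspace X) r"
  shows "quotient_topology X r = discrete_topology (topspace X // r)
         \<longleftrightarrow> (\<forall>c \<in> topspace X // r. openin X c)"
proof
  assume "quotient_topology X r = discrete_topology (topspace X // r)"
  then have "openin X c" if "c \<in> topspace X // r" for c
    using that openin_quotient_topology[OF assms, of "{c}"] by simp
  then show "\<forall>c \<in> topspace X // r. openin X c" ..
next
  assume "\<forall>c \<in> topspace X // r. openin X c"
  then show "quotient_topology X r = discrete_topology (topspace X // r)"
    unfolding topology_eq openin_quotient_topology[OF assms]
    by (auto intro: openin_Union)
qed

lemma equiv_same_nbhd_rel: "equiv (topspace X) (same_nbhd_rel X)"
  unfolding equiv_def refl_on_def sym_def trans_def same_nbhd_rel_def by auto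

lemma same_nbhd_class:
  "same_nbhd_rel X `` {x} = {y \<in> topspace X. x \<in> topspace X \<and> min_nbhd X y = min_nbhd X x}"
  unfolding same_nbhd_rel_def by auto

lemma mem_min_nbhd: "x \<in> topspace X \<Longrightarrow> x \<in> min_nbhd X x"
  unfolding min_nbhd_def by auto

lemma min_nbhd_subset_topspace: "x \<in> topspace X \<Longrightarrow> min_nbhd X x \<subseteq> topspace X"
  unfolding min_nbhd_def by auto

lemma min_nbhd_subset: "openin X U \<Longrightarrow> x \<in> U \<Longrightarrow> min_nbhd X x \<subseteq> U"
  unfolding min_nbhd_def by auto

lemma min_nbhd_mono: "y \<in> min_nbhd X x \<Longrightarrow> min_nbhd X y \<subseteq> min_nbhd X x"
  unfolding min_nbhd_def by auto

lemma openin_min_nbhd: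
  assumes "alexandroff_space X" "x \<in> topspace X"
  shows "openin X (min_nbhd X x)"
  using assms unfolding alexandroff_space_def min_nbhd_def
  by (metis (mono_tags, lifting) empty_iff mem_Collect_eq openin_topspace)

lemma same_nbhd_class_subset_min_nbhd: "same_nbhd_rel X `` {x} \<subseteq> min_nbhd X x"
  unfolding same_nbhd_class using mem_min_nbhd by fastforce

lemma same_nbhd_class_eq_min_nbhd:
  assumes "x \<in> topspace X" "irreducible_nbhd X x"
  shows "same_nbhd_rel X `` {x} = min_nbhd X x"
proof
  show "min_nbhd X x \<subseteq> same_nbhd_rel X `` {x}"
  proof
    fix y assume "y \<in> min_nbhd X x"
    moreover have "y \<in> topspace X"
      using \<open>y \<in> min_nbhd X x\<close> min_nbhd_subset_topspace[OF assms(1)] by blast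
    moreover have "min_nbhd X y = min_nbhd X x"
      using assms(2) \<open>y \<in> topspace X\<close> min_nbhd_mono[OF \<open>y \<in> min_nbhd X x\<close>]
      unfolding irreducible_nbhd_def by blast
    ultimately show "y \<in> same_nbhd_rel X `` {x}"
      using assms(1) unfolding same_nbhd_class by blast
  qed
qed (rule same_nbhd_class_subset_min_nbhd)

lemma openin_same_nbhd_class_iff:
  assumes "alexandroff_space X" "x \<in> topspace X"
  shows "openin X (same_nbhd_rel X `` {x}) \<longleftrightarrow> irreducible_nbhd X x"
proof
  assume "openin X (same_nbhd_rel X `` {x})"
  moreover have "x \<in> same_nbhd_rel X `` {x}"
    using assms(2) unfolding same_nbhd_class by simp
  ultimately have "min_nbhd X x \<subseteq> same_nbhd_rel X `` {x}"
    by (rule min_nbhd_subset)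
  show "irreducible_nbhd X x"
    unfolding irreducible_nbhd_def
  proof (intro ballI impI)
    fix y assume "y \<in> topspace X" "min_nbhd X y \<subseteq> min_nbhd X x"
    then have "y \<in> same_nbhd_rel X `` {x}"
      using mem_min_nbhd[of y X] \<open>min_nbhd X x \<subseteq> same_nbhd_rel X `` {x}\<close> by blast
    then show "min_nbhd X y = min_nbhd X x"
      unfolding same_nbhd_class by simp
  qed
next
  assume "irreducible_nbhd X x"
  then show "openin X (same_nbhd_rel X `` {x})"
    using same_nbhd_class_eq_min_nbhd[OF assms(2)] openin_min_nbhd[OF assms] by simp
qed

theorem theorem9:
  fixes X :: "'a topology"
  assumes "alexandroff_space X"
  shows "quotient_topology X (same_nbhd_rel X) = discrete_topology (topspace X // same_nbhd_rel X)
         \<longleftrightarrow> (\<forall>x\<in>topspace X. irreducible_nbhd X x)"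
proof -
  have "quotient_topology X (same_nbhd_rel X) = discrete_topology (topspace X // same_nbhd_rel X)
        \<longleftrightarrow> (\<forall>c \<in> topspace X // same_nbhd_rel X. openin X c)"
    by (rule quotient_topology_eq_discrete_iff[OF equiv_same_nbhd_rel])
  also have "\<dots> \<longleftrightarrow> (\<forall>x \<in> topspace X. openin X (same_nbhd_rel X `` {x}))"
    unfolding quotient_def by blast
  also have "\<dots> \<longleftrightarrow> (\<forall>x \<in> topspace X. irreducible_nbhd X x)"
    using openin_same_nbhd_class_iff[OF assms] by blast
  finally show ?thesis .
qed

end
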